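(* Assume the following conjecture holds for every algorithm that succeeds with high probability in $L$ with expected cost (total number of bits sent) at most $L'$ under adversarial noise: the maximal communication rate achievable by an interactive coding scheme for a binary error channel with noise rate $\epsilon$ is $1-\Theta(\sqrt{\epsilon})$ as $\epsilon \to 0$ (this holding also for fully adversarial binary channels when the parties have access to randomness unknown to the channel). Then any algorithm for robust interactive communication (i.e., one tolerating $T$ adversarial bit flips) must have $L' = L + \Omega\left(T + \sqrt{LT}\right)$ for some $T \ge 1$.
   Context: Setting: Alice and Bob simulate a noise-free two-party protocol with transcript length $L$ over a binary channel on which an adversary flips $T$ bits. $L'$ is the expected total number of bits sent by the simulating algorithm, the communication rate is $L/L'$ and the noise rate is $\epsilon = T/L'$. *)

theory Defs
  imports Complex_Main
begin

text \<open>An algorithm A (from a set Algs of algorithms for robust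
interactive communication over a binary channel) simulates a noise-free protocol
of transcript length L while the adversary flips T bits; cost A L T is the
expected total number of bits sent, L'.\<close>

definition noise_rate :: "real \<Rightarrow> nat \<Rightarrow> real" where
  "noise_rate L' T = real T / L'"

definition comm_rate :: "nat \<Rightarrow> real \<Rightarrow> real" where
  "comm_rate L L' = real L / L'"

text \<open>Upper-bound part of the conjecture: on a channel with noise rate eps
(i.e. the adversary may flip an eps fraction of the sent bits), for all
0 < eps <= eps0, every algorithm achieves communication rate at most 1 - c sqrt eps.\<close>

definition rate_upper_bound ::
  "'a set \<Rightarrow> ('a \<Rightarrow> nat \<Rightarrow> nat \<Rightarrow> real) \<Rightarrow> real \<Rightarrow> real \<Rightarrow> bool" where
  "rate_upper_bound Algs cost c eps0 \<longleftrightarrow>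
     (\<forall>eps. 0 < eps \<and> eps \<le> eps0 \<longrightarrow>
        (\<forall>A\<in>Algs. \<forall>L T. 1 \<le> L \<longrightarrow> eps \<le> noise_rate (cost A L T) T \<longrightarrow>
            comm_rate L (cost A L T) \<le> 1 - c * sqrt eps))"

end

theory Submission
  imports Defs
begin

text \<open>Write \<open>C\<close> for the cost and apply the conjectured rate bound at the noise rate
\<open>\<epsilon> = min \<epsilon>\<^sub>0 (T / C)\<close>: it gives \<open>C - L \<ge> c \<surd>\<epsilon> C\<close>, and since \<open>T \<le> C\<close> this is at least a
constant times \<open>\<surd>(T C)\<close>. As both \<open>L\<close> and \<open>T\<close> are at most \<open>C\<close>, \<open>\<surd>(T C)\<close> dominates
\<open>T\<close> as well as \<open>\<surd>(L T)\<close>.\<close>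

lemma sqrt_divide_mult_self:
  fixes x C :: real
  assumes "0 < C"
  shows "sqrt (x / C) * C = sqrt (x * C)"
proof -
  have "sqrt (x / C) * C = sqrt (x / C) * sqrt (C * C)"
    using assms by simp
  also have "\<dots> = sqrt (x * C)"
    using assms by (simp only: real_sqrt_mult[symmetric]) (simp add: field_simps)
  finally show ?thesis .
qed

lemma add_sqrt_mult_le_two_sqrt:
  fixes L T C :: real
  assumes "0 \<le> L" "L \<le> C" "0 \<le> T" "T \<le> C"
  shows "T + sqrt (L * T) \<le> 2 * sqrt (T * C)"
proof -
  have "T = sqrt (T * T)"
    using assms by simp
  also have "\<dots> \<le> sqrt (T * C)"
    using assms by (intro real_sqrt_le_mono mult_left_mono)
  finally have "T \<le> sqrt (T * C)" .
  moreover have "sqrt (L * T) \<le> sqrt (T * C)"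
    using assms by (intro real_sqrt_le_mono) (simp add: mult.commute mult_right_mono)
  ultimately show ?thesis
    by linarith
qed

lemma sqrt_mult_le_sqrt_min_mult:
  fixes e T C :: real
  assumes "0 \<le> e" "0 \<le> T" "T \<le> C" "0 < C"
  shows "min 1 (sqrt e) * sqrt (T * C) \<le> sqrt (min e (T / C)) * C"
proof -
  have TC: "sqrt (T * C) \<le> C"
    using assms real_sqrt_le_mono[of "T * C" "C * C"] by (simp add: mult_right_mono)
  have "sqrt (min e (T / C)) * C = min (sqrt e) (sqrt (T / C)) * C"
    by (simp add: min_def)
  also have "\<dots> = min (sqrt e * C) (sqrt (T * C))"
    using assms by (simp add: min_mult_distrib_right sqrt_divide_mult_self)
  finally have "sqrt (min e (T / C)) * C = min (sqrt e * C) (sqrt (T * C))" .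
  moreover have "min 1 (sqrt e) * sqrt (T * C) \<le> sqrt e * C"
    using assms TC by (intro mult_mono) auto
  moreover have "min 1 (sqrt e) * sqrt (T * C) \<le> 1 * sqrt (T * C)"
    using assms by (intro mult_right_mono) auto
  ultimately show ?thesis
    by simp
qed

lemma rate_upper_bound_cost_gap:
  assumes "rate_upper_bound Algs cost c eps0" "0 < eps0" "A \<in> Algs" "1 \<le> L" "1 \<le> T"
    and "0 < cost A L T"
  shows "c * sqrt (min eps0 (noise_rate (cost A L T) T)) * cost A L T \<le> cost A L T - real L"
proof -
  let ?C = "cost A L T" and ?eps = "min eps0 (noise_rate (cost A L T) T)"
  have "0 < ?eps"
    using assms by (simp add: noise_rate_def)
  then have "real L / ?C \<le> 1 - c * sqrt ?eps"
    using assms unfolding rate_upper_bound_def comm_rate_def by auto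
  then show ?thesis
    using \<open>0 < ?C\<close> by (simp add: field_simps)
qed

lemma rate_upper_bound_cost_lower_bound:
  assumes bound: "rate_upper_bound Algs cost c eps0" and "0 < c" "0 < eps0"
    and "A \<in> Algs" "1 \<le> L" "1 \<le> T" "0 < cost A L T" "real T \<le> cost A L T"
  shows "real L + c * min 1 (sqrt eps0) / 2 * (real T + sqrt (real L * real T)) \<le> cost A L T"
proof -
  let ?C = "cost A L T" and ?k = "c * min 1 (sqrt eps0)"
  have "?k * sqrt (real T * ?C) \<le> c * (sqrt (min eps0 (real T / ?C)) * ?C)"
    unfolding mult.assoc using assms
    by (intro mult_left_mono sqrt_mult_le_sqrt_min_mult) auto
  also have "\<dots> \<le> ?C - real L"
    using rate_upper_bound_cost_gap[OF bound \<open>0 < eps0\<close> \<open>A \<in> Algs\<close> \<open>1 \<le> L\<close> \<open>1 \<le> T\<close> \<open>0 < ?C\<close>]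
    by (simp add: noise_rate_def mult.assoc)
  finally have gap: "?k * sqrt (real T * ?C) \<le> ?C - real L" .
  moreover have "0 \<le> ?k * sqrt (real T * ?C)"
    using assms by simp
  ultimately have "real L \<le> ?C"
    by linarith
  then have "real T + sqrt (real L * real T) \<le> 2 * sqrt (real T * ?C)"
    using assms by (intro add_sqrt_mult_le_two_sqrt) auto
  then have "?k / 2 * (real T + sqrt (real L * real T)) \<le> ?k / 2 * (2 * sqrt (real T * ?C))"
    using assms by (intro mult_left_mono) auto
  with gap show ?thesis
    by simp
qed

theorem theorem8:
  fixes Algs :: "'a set" and cost :: "'a \<Rightarrow> nat \<Rightarrow> nat \<Rightarrow> real"
  assumes flips_le_sent: "\<And>A L T. A \<in> Algs \<Longrightarrow> real T \<le> cost A L T"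
    and cost_pos: "\<And>A L T. A \<in> Algs \<Longrightarrow> 0 < cost A L T"
    and conjecture: "\<exists>c>0. \<exists>eps0>0. rate_upper_bound Algs cost c eps0"
  shows "\<exists>c>0. \<forall>A\<in>Algs. \<forall>L T. 1 \<le> L \<longrightarrow> 1 \<le> T \<longrightarrow>
           cost A L T \<ge> real L + c * (real T + sqrt (real L * real T))"
proof -
  obtain c eps0 where "0 < c" "0 < eps0" and bound: "rate_upper_bound Algs cost c eps0"
    using conjecture by blast
  have "0 < c * min 1 (sqrt eps0) / 2"
    using \<open>0 < c\<close> \<open>0 < eps0\<close> by simp
  moreover have "real L + c * min 1 (sqrt eps0) / 2 * (real T + sqrt (real L * real T)) \<le> cost A L T"
    if "A \<in> Algs" "1 \<le> L" "1 \<le> T" for A L T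
    using rate_upper_bound_cost_lower_bound[OF bound \<open>0 < c\<close> \<open>0 < eps0\<close> that]
      cost_pos flips_le_sent that by blast
  ultimately show ?thesis
    by (intro exI[of _ "c * min 1 (sqrt eps0) / 2"] conjI allI ballI impI) simp_all
qed

end
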